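(* For all $n\in\mathbb{N}$, $a_{n,1-n}=a_{n,n-1}=0$, and for all $j\in\mathbb{N}$, $a_{2j,1}=a_{2j,-1}=0$. Equivalently, the generating functions $A_k(x)=\sum_{n\ge\lfloor (k+1)/2\rfloor}\Theta^na_{n,k-n}x^n$ satisfy $A_{2j-1}\equiv0$ for all $j\in\mathbb{N}$.
   Context: Let $\varepsilon\in\{\pm1\}$, $b\in\mathbb{R}\setminus\{0\}$, $a\in\mathbb{C}$, and consider the degenerate third Painlevé equation $u''=\frac{(u')^2}{u}-\frac{u'}{\tau}+\frac1\tau(-8\varepsilon u^2+2ab)+\frac{b^2}{u}$. Put $\theta(\tau)=3^{3/2}(\varepsilon b)^{1/3}\tau^{2/3}$, $\Theta=3^{3/4}(\varepsilon b)^{1/6}$ (so $\theta=\Theta^2\tau^{2/3}$) and $\alpha=2i\sqrt3\,a$. Let $\varkappa\in\mathbb{C}$ with $|\mathrm{Re}\,\varkappa|<1/2$ and $w=\tau^{2\varkappa/3}e^{i\theta(\tau)}$. Consider the (general-solution) asymptotic expansion $$u(\tau)=\frac{\varepsilon(\varepsilon b)^{2/3}}{2}\tau^{1/3}\Big(1+\sum_{k=1}^{\infty}\tau^{-k/3}\sum_{j=-k}^{k}a_{k,j}w^j\Big),\qquad \mathrm{Re}\,\tau\to+\infty,\ |\mathrm{Im}\,\theta(\tau)|<\delta,$$ where $a_{1,0}=0$, $a_{1,1}a_{1,-1}=-\dfrac{i\varkappa}{\sqrt3(\varepsilon b)^{1/3}}$ (equivalently $\Theta^2a_{1,1}a_{1,-1}=-3i\varkappa$),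 and all remaining coefficients $a_{k,j}$ are uniquely determined by $a_{1,1},a_{1,-1},a,b,\varepsilon$ via formal substitution of the expansion into the equation; set $a_{0,0}=1$. *)

theory Defs
  imports Complex_Main "HOL-Computational_Algebra.Formal_Power_Series"
begin

text \<open>Formal bi-series in s = tau^(1/3) and w = tau^(2 kappa/3) e^(i theta).
  A series f with top degree p0 has coefficient f n j in front of s^(p0 - n) w^j
  (n a natural number, j an integer); all series used satisfy f n j = 0 for |j| > n.\<close>

type_synonym fser = "nat \<Rightarrow> int \<Rightarrow> complex"

text \<open>Product of formal series (valid when the first factor satisfies f m i = 0 for |i| > m);
  the top degrees add.\<close>
definition fconv :: "fser \<Rightarrow> fser \<Rightarrow> fser" where
  "fconv f g n j = (\<Sum>m\<in>{0..n}. \<Sum>i\<in>{- int m..int m}. f m i * g (n - m) (j - i))"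

text \<open>The Euler operator D = tau d/dtau on a series with top degree p0; the result has top
  degree p0 + 2.  Since s = tau^(1/3), tau*theta' = (2/3) Theta^2 s^2:
  D (s^p w^j) = ((p + 2 j kappa)/3) s^p w^j + (2 i/3) Theta^2 j s^(p+2) w^j.\<close>
definition fD :: "complex \<Rightarrow> complex \<Rightarrow> int \<Rightarrow> fser \<Rightarrow> fser" where
  "fD \<kappa> \<Theta> p0 f n j =
     (if 2 \<le> n then ((of_int (p0 - int (n - 2)) + 2 * of_int j * \<kappa>) / 3) * f (n - 2) j else 0)
     + (2 * \<i> / 3) * \<Theta>\<^sup>2 * of_int j * f n j"

text \<open>The normalised ansatz v = 1 + sum_{k>=1} tau^(-k/3) sum_{|j|<=k} a_{k,j} w^j,
  i.e. v has top degree 1 and coefficient a k j at s^(1-k) w^j (with a 0 0 = 1).\<close>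
definition vser :: "(nat \<Rightarrow> int \<Rightarrow> complex) \<Rightarrow> fser" where
  "vser a k j = (if \<bar>j\<bar> \<le> int k then a k j else 0)"

text \<open>With u = c v, c = eps (eps b)^(2/3) / 2 = eps beta^2/2 (beta a cube root of eps b),
  multiplying the degenerate Painleve III equation by tau^2 u gives
  u D^2 u - (D u)^2 + 8 eps s^3 u^3 - 2 a b s^3 u - b^2 s^6 = 0.
  The coefficient of s^(6-n) w^j of the left-hand side:\<close>
definition PIII_residual ::
  "real \<Rightarrow> real \<Rightarrow> complex \<Rightarrow> complex \<Rightarrow> complex \<Rightarrow> complex \<Rightarrow> (nat \<Rightarrow> int \<Rightarrow> complex) \<Rightarrow> fser" where
  "PIII_residual \<epsilon> b a \<beta> \<kappa> \<Theta> acoef n j =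
    (let c = of_real \<epsilon> * \<beta>\<^sup>2 / 2;
         U = (\<lambda>k i. c * vser acoef k i);
         DU = fD \<kappa> \<Theta> 1 U;
         DDU = fD \<kappa> \<Theta> 3 DU
     in fconv U DDU n j - fconv DU DU n j
        + 8 * of_real \<epsilon> * fconv U (fconv U U) n j
        - (if 2 \<le> n then 2 * a * of_real b * U (n - 2) j else 0)
        - (if n = 0 \<and> j = 0 then (of_real b)\<^sup>2 else 0))"

definition A_gen :: "complex \<Rightarrow> (nat \<Rightarrow> int \<Rightarrow> complex) \<Rightarrow> nat \<Rightarrow> complex fps" where
  "A_gen \<Theta> acoef k = Abs_fps (\<lambda>n. if (k + 1) div 2 \<le> n then \<Theta> ^ n * acoef n (int k - int n) else 0)"

end

theory Submission
  imports Defs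
begin

(* Call (n, j) an odd position if n + j is odd; we show that U = c v vanishes at every odd
   position, by induction on the level n.  If U vanishes at all odd positions of level < n,
   every convolution in the residual, taken at an odd position (N, j) with N >= n, only pairs
   an even-position coefficient of level <= N - n with an odd-position coefficient of level
   >= n.  At level n itself the residual reduces to 24 eps c^2 (1 - j^2) U(n,j) = 0, so only
   the resonant coefficients U(n,+-1), n even, remain.  For them the residuals at level n + 1
   express U(n+1,0), U(n+1,+-2) through U(n,+-1), and the residuals at level n + 2, j = +-1,
   then form a 2x2 linear system for U(n,+-1) whose determinant is a nonzero multiple of
   (n - 1)^2: the kappa-dependence cancels because Theta^2 a(1,1) a(1,-1) = -3 i kappa.  Every coefficient named in the theorem sits
   at an odd position. *)

section \<open>Parity structure of formal series\<close>

definition triangular :: "fser \<Rightarrow> bool" where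
  "triangular f \<longleftrightarrow> (\<forall>m i. int m < \<bar>i\<bar> \<longrightarrow> f m i = 0)"

definition odd_free_below :: "nat \<Rightarrow> fser \<Rightarrow> bool" where
  "odd_free_below n f \<longleftrightarrow> (\<forall>m i. m < n \<longrightarrow> odd (int m + i) \<longrightarrow> f m i = 0)"

definition even_part :: "fser \<Rightarrow> fser" where
  "even_part f m i = (if even (int m + i) then f m i else 0)"

definition even_low_conv :: "fser \<Rightarrow> fser \<Rightarrow> nat \<Rightarrow> nat \<Rightarrow> int \<Rightarrow> complex" where
  "even_low_conv f g K N j =
     (\<Sum>m=0..K. \<Sum>i=- int m..int m.
        even_part f m i * g (N - m) (j - i) + even_part g m i * f (N - m) (j - i))"

lemma triangularD: "triangular f \<Longrightarrow> int m < \<bar>i\<bar> \<Longrightarrow> f m i = 0"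
  by (simp add: triangular_def)

lemma odd_free_belowD: "odd_free_below n f \<Longrightarrow> m < n \<Longrightarrow> odd (int m + i) \<Longrightarrow> f m i = 0"
  by (simp add: odd_free_below_def)

lemma odd_free_below_mono: "odd_free_below n f \<Longrightarrow> m \<le> n \<Longrightarrow> odd_free_below m f"
  unfolding odd_free_below_def by auto

lemma triangular_fD: "triangular f \<Longrightarrow> triangular (fD \<kappa> \<Theta> p f)"
  unfolding triangular_def fD_def by auto

lemma odd_free_below_fD:
  assumes f: "odd_free_below n f" shows "odd_free_below n (fD \<kappa> \<Theta> p f)"
  unfolding odd_free_below_def
proof (intro allI impI)
  fix m i assume m: "m < n" and odd: "odd (int m + i)"
  have "f (m - 2) i = 0" if "2 \<le> m"
    using odd_free_belowD[OF f, of "m - 2" i] m odd that by (simp add: of_nat_diff)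
  then show "fD \<kappa> \<Theta> p f m i = 0"
    using odd_free_belowD[OF f m odd] by (simp add: fD_def)
qed

lemma triangular_fconv:
  assumes "triangular g" shows "triangular (fconv f g)"
  unfolding triangular_def fconv_def
proof (intro allI impI sum.neutral ballI)
  fix n j m i assume "int n < \<bar>j\<bar>" "m \<in> {0..n}" "i \<in> {- int m..int m}"
  then have "int (n - m) < \<bar>j - i\<bar>" by auto
  then show "f m i * g (n - m) (j - i) = 0" using triangularD[OF assms] by simp
qed

lemma odd_free_below_fconv:
  assumes f: "odd_free_below n f" and g: "odd_free_below n g"
  shows "odd_free_below n (fconv f g)"
  unfolding odd_free_below_def fconv_def
proof (intro allI impI sum.neutral ballI)
  fix L j m i assume L: "L < n" and odd: "odd (int L + j)"
    and m: "m \<in> {0..L}" and "i \<in> {- int m..int m}"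
  show "f m i * g (L - m) (j - i) = 0"
  proof (cases "odd (int m + i)")
    case True then show ?thesis using odd_free_belowD[OF f] m L by simp
  next
    case False
    then have "odd (int (L - m) + (j - i))" using odd m by (auto simp: of_nat_diff)
    then show ?thesis using odd_free_belowD[OF g] m L by simp
  qed
qed

text \<open>At an odd position the reflection \<open>i \<mapsto> j - i\<close> exchanges the odd part of
  one factor with the even part of the other.\<close>

lemma sum_odd_part_reflect:
  assumes f: "triangular f" and g: "triangular g" and odd: "odd (int L + int m + j)"
  shows "(\<Sum>i=- int L..int L. (if odd (int L + i) then f L i else 0) * g m (j - i))
       = (\<Sum>i=- int m..int m. even_part g m i * f L (j - i))"
proof -
  define B where "B = int L + int m + \<bar>j\<bar>"
  define F where "F i = (if odd (int L + i) then f L i else 0) * g m (j - i)" for i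
  define G where "G i = even_part g m i * f L (j - i)" for i
  have "(\<Sum>i=- int L..int L. F i) = (\<Sum>i=-B..B. F i)"
    by (rule sum.mono_neutral_left) (auto simp: B_def F_def triangularD[OF f])
  also have "\<dots> = (\<Sum>i=-B..B. G (j - i))"
    using odd by (intro sum.cong) (auto simp: F_def G_def even_part_def)
  also have "\<dots> = (\<Sum>i\<in>(\<lambda>i. j - i) ` {-B..B}. G i)"
    by (subst sum.reindex) (auto simp: inj_on_def)
  also have "\<dots> = (\<Sum>i=- int m..int m. G i)"
  proof (rule sum.mono_neutral_right)
    show "{- int m..int m} \<subseteq> (\<lambda>i. j - i) ` {- B..B}"
    proof
      fix x assume "x \<in> {- int m..int m}"
      then have "j - x \<in> {-B..B}" by (auto simp: B_def)
      then show "x \<in> (\<lambda>i. j - i) ` {- B..B}" by (rule rev_image_eqI) simp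
    qed
  qed (auto simp: G_def even_part_def triangularD[OF g])
  finally show ?thesis by (simp add: F_def G_def)
qed

lemma fconv_at_odd_position:
  assumes tf: "triangular f" and tg: "triangular g"
    and f: "odd_free_below n f" and g: "odd_free_below n g"
    and nN: "n \<le> N" and odd: "odd (int N + j)"
  shows "fconv f g N j = even_low_conv f g (N - n) N j"
proof -
  define fo where "fo m i = (if odd (int m + i) then f m i else 0)" for m i
  have split: "f m i = even_part f m i + fo m i" for m i by (simp add: even_part_def fo_def)
  have "fconv f g N j = (\<Sum>m=0..N. \<Sum>i=- int m..int m. even_part f m i * g (N-m) (j-i))
       + (\<Sum>m=0..N. \<Sum>i=- int m..int m. fo m i * g (N-m) (j-i))"
    unfolding fconv_def by (subst split) (simp add: distrib_right sum.distrib)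
  also have "(\<Sum>m=0..N. \<Sum>i=- int m..int m. even_part f m i * g (N-m) (j-i))
      = (\<Sum>m=0..N-n. \<Sum>i=- int m..int m. even_part f m i * g (N-m) (j-i))"
  proof (rule sum.mono_neutral_right)
    show "\<forall>m\<in>{0..N} - {0..N - n}. (\<Sum>i = - int m..int m. even_part f m i * g (N - m) (j - i)) = 0"
    proof (intro ballI sum.neutral)
      fix m i assume m: "m \<in> {0..N} - {0..N - n}" and "i \<in> {- int m..int m}"
      show "even_part f m i * g (N - m) (j - i) = 0"
      proof (cases "even (int m + i)")
        case True
        then have "odd (int (N - m) + (j - i))" using odd m by (auto simp: of_nat_diff)
        moreover have "N - m < n" using m nN by auto
        ultimately show ?thesis using odd_free_belowD[OF g] by simp
      qed (simp add: even_part_def)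
    qed
  qed auto
  also have "(\<Sum>m=0..N. \<Sum>i=- int m..int m. fo m i * g (N-m) (j-i))
      = (\<Sum>m=n..N. \<Sum>i=- int m..int m. fo m i * g (N-m) (j-i))"
    by (rule sum.mono_neutral_right) (auto intro!: sum.neutral simp: fo_def odd_free_belowD[OF f])
  also have "\<dots> = (\<Sum>m=0..N-n. \<Sum>i=- int (N-m)..int (N-m). fo (N-m) i * g m (j-i))"
    by (rule sum.reindex_bij_witness[of _ "\<lambda>m. N - m" "\<lambda>m. N - m"]) (use nN in auto)
  also have "\<dots> = (\<Sum>m=0..N-n. \<Sum>i=- int m..int m. even_part g m i * f (N-m) (j-i))"
  proof (rule sum.cong[OF refl])
    fix m assume "m \<in> {0..N-n}"
    then have "odd (int (N - m) + int m + j)" using odd nN by (simp add: of_nat_diff)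
    then show "(\<Sum>i=- int (N-m)..int (N-m). fo (N-m) i * g m (j-i))
             = (\<Sum>i=- int m..int m. even_part g m i * f (N-m) (j-i))"
      unfolding fo_def by (rule sum_odd_part_reflect[OF tf tg])
  qed
  finally show ?thesis by (simp add: even_low_conv_def sum.distrib)
qed

lemma int_atLeastAtMost_minus1_1: "{-1..1::int} = {-1, 0, 1}" by auto
lemma int_atLeastAtMost_minus2_2: "{-2..2::int} = {-2, -1, 0, 1, 2}" by auto
lemma nat_atLeastAtMost_0_1: "{0..1::nat} = {0, 1}" by auto
lemma nat_atLeastAtMost_0_2: "{0..2::nat} = {0, 1, 2}" by auto

section \<open>Formal solutions of the degenerate Painleve III equation\<close>

locale PIII_formal_solution =
  fixes \<epsilon> b :: real and a \<beta> \<Theta> \<kappa> :: complex and acoef :: "nat \<Rightarrow> int \<Rightarrow> complex"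
  assumes eps: "\<epsilon> = 1 \<or> \<epsilon> = -1"
    and b: "b \<noteq> 0"
    and beta: "\<beta> ^ 3 = of_real (\<epsilon> * b)"
    and Theta: "\<Theta>\<^sup>2 = 3 * of_real (sqrt 3) * \<beta>"
    and a00: "acoef 0 0 = 1"
    and a10: "acoef 1 0 = 0"
    and a11: "\<Theta>\<^sup>2 * acoef 1 1 * acoef 1 (-1) = - 3 * \<i> * \<kappa>"
    and formal: "\<forall>n j. PIII_residual \<epsilon> b a \<beta> \<kappa> \<Theta> acoef n j = 0"
begin

definition "c = of_real \<epsilon> * \<beta>\<^sup>2 / 2"
definition "U = (\<lambda>k i. c * vser acoef k i)"
definition "DU = fD \<kappa> \<Theta> 1 U"
definition "DDU = fD \<kappa> \<Theta> 3 DU"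
definition "V = fconv U U"

lemma coefficient_equation:
  "fconv U DDU n j - fconv DU DU n j + 8 * of_real \<epsilon> * fconv U V n j
   = (if 2 \<le> n then 2 * a * of_real b * U (n - 2) j else 0)
   + (if n = 0 \<and> j = 0 then (of_real b)\<^sup>2 else 0)"
proof -
  have residual: "PIII_residual \<epsilon> b a \<beta> \<kappa> \<Theta> acoef n j
    = fconv U DDU n j - fconv DU DU n j + 8 * of_real \<epsilon> * fconv U V n j
      - (if 2 \<le> n then 2 * a * of_real b * U (n - 2) j else 0)
      - (if n = 0 \<and> j = 0 then (of_real b)\<^sup>2 else 0)"
    unfolding PIII_residual_def Let_def c_def[symmetric] U_def[symmetric]
      DU_def[symmetric] DDU_def[symmetric] V_def[symmetric] by (simp add: U_def)
  from formal[rule_format, of n j, unfolded residual] show ?thesis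
    by (simp only: diff_diff_eq right_minus_eq)
qed

lemma eps_sq: "(of_real \<epsilon> :: complex)\<^sup>2 = 1"
  using eps by auto

lemma c_nonzero: "c \<noteq> 0"
proof -
  have "\<beta> \<noteq> 0" using beta b eps by auto
  then show ?thesis using eps by (auto simp: c_def)
qed

lemma eps_c_sq_nonzero: "of_real \<epsilon> * c\<^sup>2 \<noteq> 0"
  using c_nonzero eps by auto

lemma Theta_pow4: "(\<Theta>\<^sup>2)\<^sup>2 = 54 * of_real \<epsilon> * c" "\<Theta> ^ 4 = 54 * of_real \<epsilon> * c"
proof -
  have sqrt3: "(of_real (sqrt 3) :: complex)\<^sup>2 = 3"
    by (metis of_real_numeral of_real_power real_sqrt_pow2 zero_le_numeral)
  have "(\<Theta>\<^sup>2)\<^sup>2 = 9 * (of_real (sqrt 3))\<^sup>2 * \<beta>\<^sup>2"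
    unfolding Theta by (simp add: power_mult_distrib)
  also have "\<dots> = 54 * of_real \<epsilon> * c"
    using sqrt3 eps_sq unfolding c_def by (simp add: power2_eq_square)
  finally show "(\<Theta>\<^sup>2)\<^sup>2 = 54 * of_real \<epsilon> * c" .
  then show "\<Theta> ^ 4 = 54 * of_real \<epsilon> * c" by (simp add: power_mult[symmetric])
qed

lemma triangular_U: "triangular U" "triangular DU" "triangular DDU" "triangular V"
proof -
  show U: "triangular U" by (auto simp: triangular_def U_def vser_def)
  then show DU: "triangular DU" unfolding DU_def by (rule triangular_fD)
  then show "triangular DDU" unfolding DDU_def by (rule triangular_fD)
  show "triangular V" unfolding V_def using U by (rule triangular_fconv)
qed

lemma odd_free_below_derived:
  assumes "odd_free_below n U"
  shows "odd_free_below n DU" "odd_free_below n DDU" "odd_free_below n V"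
  using assms by (simp_all add: DU_def DDU_def V_def odd_free_below_fD odd_free_below_fconv)

lemma U_low_levels:
  "U 0 j = (if j = 0 then c else 0)"
  "U (Suc 0) j = (if j = 1 then c * acoef 1 1 else if j = -1 then c * acoef 1 (-1) else 0)"
  "U 2 j = (if \<bar>j\<bar> \<le> 2 then c * acoef 2 j else 0)"
proof -
  show "U 0 j = (if j = 0 then c else 0)" using a00 by (simp add: U_def vser_def)
  show "U (Suc 0) j = (if j = 1 then c * acoef 1 1 else if j = -1 then c * acoef 1 (-1) else 0)"
    using a10 by (cases "j = 0") (auto simp: U_def vser_def)
  show "U 2 j = (if \<bar>j\<bar> \<le> 2 then c * acoef 2 j else 0)" by (simp add: U_def vser_def)
qed

lemma derived_at_origin: "DU 0 0 = 0" "DDU 0 0 = 0" "V 0 0 = c\<^sup>2"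
  by (simp_all add: DU_def DDU_def fD_def V_def fconv_def U_low_levels power2_eq_square)

lemmas low_level_simps = U_low_levels DDU_def DU_def fD_def
  int_atLeastAtMost_minus1_1 int_atLeastAtMost_minus2_2 nat_atLeastAtMost_0_1 nat_atLeastAtMost_0_2

lemma coefficient_equation_at_odd_position:
  assumes U: "odd_free_below n U" and nN: "n \<le> N" and odd: "odd (int N + j)"
  shows "even_low_conv U DDU (N - n) N j - even_low_conv DU DU (N - n) N j
       + 8 * of_real \<epsilon> * even_low_conv U V (N - n) N j
       = (if 2 \<le> N then 2 * a * of_real b * U (N - 2) j else 0)"
proof -
  have "(if N = 0 \<and> j = 0 then (of_real b)\<^sup>2 else 0) = (0::complex)" using odd by auto
  then show ?thesis
    using coefficient_equation[of N j]
    by (simp add: fconv_at_odd_position[OF triangular_U(1,3) U odd_free_below_derived(2)[OF U] nN odd]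
      fconv_at_odd_position[OF triangular_U(2,2) odd_free_below_derived(1,1)[OF U] nN odd]
      fconv_at_odd_position[OF triangular_U(1,4) U odd_free_below_derived(3)[OF U] nN odd])
qed

lemma U_nonresonant:
  assumes U: "odd_free_below n U" and n: "1 \<le> n" and odd: "odd (int n + j)" and j: "j\<^sup>2 \<noteq> 1"
  shows "U n j = 0"
proof -
  have below: "U (n - 2) j = 0" "DU (n - 2) j = 0" if "2 \<le> n"
    using odd_free_belowD[OF U, of "n - 2" j]
      odd_free_belowD[OF odd_free_below_derived(1)[OF U], of "n - 2" j]
      odd that by (simp_all add: of_nat_diff)
  have DU_n: "DU n j = 2 * \<i> / 3 * \<Theta>\<^sup>2 * of_int j * U n j"
    using below by (simp add: DU_def fD_def)
  have DDU_n: "DDU n j = 2 * \<i> / 3 * \<Theta>\<^sup>2 * of_int j * DU n j"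
    using below by (simp add: DDU_def fD_def)
  have V_n: "V n j = 2 * c * U n j"
    unfolding V_def
    by (subst fconv_at_odd_position[OF triangular_U(1,1) U U order_refl odd])
      (simp add: even_low_conv_def even_part_def U_low_levels)
  have "c * U n j * ((2 * \<i> / 3 * \<Theta>\<^sup>2 * of_int j)\<^sup>2 + 24 * of_real \<epsilon> * c) = 0"
    using coefficient_equation_at_odd_position[OF U order_refl odd] DU_n DDU_n V_n below n
    by (simp add: even_low_conv_def even_part_def U_low_levels derived_at_origin
        algebra_simps power2_eq_square)
  moreover have "(2 * \<i> / 3 * \<Theta>\<^sup>2 * of_int j)\<^sup>2 + 24 * of_real \<epsilon> * c
      = 24 * of_real \<epsilon> * c * (1 - of_int (j\<^sup>2))"
    by (simp add: power_mult_distrib power_divide Theta_pow4 algebra_simps)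
  moreover have "(1::complex) - of_int (j\<^sup>2) \<noteq> 0"
    using j by (metis eq_iff_diff_eq_0 of_int_1 of_int_eq_iff)
  ultimately show ?thesis using c_nonzero eps by auto
qed

lemma level2_coeffs:
  "acoef 2 2 = (acoef 1 1)\<^sup>2 / 3"
  "acoef 2 (-2) = (acoef 1 (-1))\<^sup>2 / 3"
  "24 * c^3 * of_real \<epsilon> * acoef 2 0
     = 2 * c * a * of_real b + 48 * c^3 * of_real \<epsilon> * acoef 1 1 * acoef 1 (-1)"
proof -
  note low_level_simps [simp] fconv_def [simp] V_def [simp]
  have "c^3 * of_real \<epsilon> * (24 * (acoef 1 1)\<^sup>2 - 72 * acoef 2 2) = 0"
    using coefficient_equation[of 2 2, simplified, unfolded One_nat_def[symmetric]]
      Theta_pow4 i_squared by algebra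
  then show "acoef 2 2 = (acoef 1 1)\<^sup>2 / 3" using c_nonzero eps by auto
  have "c^3 * of_real \<epsilon> * (24 * (acoef 1 (-1))\<^sup>2 - 72 * acoef 2 (-2)) = 0"
    using coefficient_equation[of 2 "-2", simplified, unfolded One_nat_def[symmetric]]
      Theta_pow4 i_squared by algebra
  then show "acoef 2 (-2) = (acoef 1 (-1))\<^sup>2 / 3" using c_nonzero eps by auto
  show "24 * c^3 * of_real \<epsilon> * acoef 2 0
     = 2 * c * a * of_real b + 48 * c^3 * of_real \<epsilon> * acoef 1 1 * acoef 1 (-1)"
    using coefficient_equation[of 2 0, simplified, unfolded One_nat_def[symmetric]]
      Theta_pow4 i_squared by algebra
qed

lemma V_low_levels:
  "V 1 1 = 2 * c\<^sup>2 * acoef 1 1"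
  "V 1 (-1) = 2 * c\<^sup>2 * acoef 1 (-1)"
  "V 2 0 = 2 * c\<^sup>2 * acoef 2 0 + 2 * c\<^sup>2 * acoef 1 1 * acoef 1 (-1)"
  "V 2 2 = 2 * c\<^sup>2 * acoef 2 2 + c\<^sup>2 * (acoef 1 1)\<^sup>2"
  "V 2 (-2) = 2 * c\<^sup>2 * acoef 2 (-2) + c\<^sup>2 * (acoef 1 (-1))\<^sup>2"
  by (simp_all add: low_level_simps fconv_def V_def power2_eq_square)

context
  fixes t assumes t: "even t" and U: "odd_free_below (t + 2) U"
begin

text \<open>The variants with \<open>Suc\<close> are the forms in which these terms arise when the
  simplifier expands the coefficient equations at levels \<open>t + 3\<close> and \<open>t + 4\<close>.\<close>

lemma U_odd_positions_below:
  "odd j \<Longrightarrow> U t j = 0"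
  "even j \<Longrightarrow> U (Suc t) j = 0"
  "Suc 0 \<le> t \<Longrightarrow> even j \<Longrightarrow> U (t - Suc 0) j = 0"
  "odd j \<Longrightarrow> U (t - 2) j = 0"
  "odd j \<Longrightarrow> U (t - Suc (Suc 0)) j = 0"
proof -
  show "odd j \<Longrightarrow> U t j = 0" "even j \<Longrightarrow> U (Suc t) j = 0"
      "Suc 0 \<le> t \<Longrightarrow> even j \<Longrightarrow> U (t - Suc 0) j = 0"
    using odd_free_belowD[OF U, of t j] odd_free_belowD[OF U, of "Suc t" j]
      odd_free_belowD[OF U, of "t - 1" j] t by (simp_all add: of_nat_diff)
  show "odd j \<Longrightarrow> U (t - 2) j = 0"
    using odd_free_belowD[OF U, of "t - 2" j] t U_low_levels(1)[of j]
    by (cases "2 \<le> t") (auto simp: of_nat_diff)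
  then show "odd j \<Longrightarrow> U (t - Suc (Suc 0)) j = 0" by (simp add: numeral_2_eq_2)
qed

lemma U_level_t2_pm3: "U (t + 2) 3 = 0" "U (t + 2) (-3) = 0"
  using U_nonresonant[OF U] t by auto

lemma V_at_odd_position:
  assumes "t + 2 \<le> N" "odd (int N + j)"
  shows "V N j = (\<Sum>m=0..N-(t+2). \<Sum>i=- int m..int m. 2 * (even_part U m i * U (N-m) (j-i)))"
  unfolding V_def fconv_at_odd_position[OF triangular_U(1,1) U U assms]
  by (simp add: even_low_conv_def sum_distrib_left)

lemma V_above_t:
  "odd j \<Longrightarrow> V (t + 2) j = 2 * c * U (t + 2) j"
  "even j \<Longrightarrow> V (t + 3) j = 2 * c * U (t + 3) j
     + 2 * c * acoef 1 1 * U (t + 2) (j - 1) + 2 * c * acoef 1 (-1) * U (t + 2) (j + 1)"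
  "odd j \<Longrightarrow> V (t + 4) j = 2 * c * U (t + 4) j
     + 2 * c * acoef 1 1 * U (t + 3) (j - 1) + 2 * c * acoef 1 (-1) * U (t + 3) (j + 1)
     + 2 * c * acoef 2 0 * U (t + 2) j + 2 * c * acoef 2 2 * U (t + 2) (j - 2)
     + 2 * c * acoef 2 (-2) * U (t + 2) (j + 2)"
  using t by (auto simp: V_at_odd_position even_part_def U_low_levels
      int_atLeastAtMost_minus1_1 int_atLeastAtMost_minus2_2 nat_atLeastAtMost_0_1
      nat_atLeastAtMost_0_2 algebra_simps)

lemma levels_Suc: "t + 2 = Suc (Suc t)" "t + 3 = Suc (Suc (Suc t))" "t + 4 = Suc (Suc (Suc (Suc t)))"
  by auto

lemmas resonance_simps = U_odd_positions_below U_level_t2_pm3[unfolded levels_Suc]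
  V_above_t[unfolded levels_Suc] levels_Suc t low_level_simps even_low_conv_def even_part_def
  derived_at_origin V_low_levels V_low_levels[unfolded One_nat_def]

lemma U_next_level:
  "U (t + 3) 0 = 2 * (acoef 1 1 * U (t + 2) (-1) + acoef 1 (-1) * U (t + 2) 1)"
  "U (t + 3) 2 = 2/3 * acoef 1 1 * U (t + 2) 1"
  "U (t + 3) (-2) = 2/3 * acoef 1 (-1) * U (t + 2) (-1)"
proof -
  note resonance_simps [simp] if_cong [cong]
  have "of_real \<epsilon> * c\<^sup>2 * (U (t + 3) 0
      - 2 * (acoef 1 1 * U (t + 2) (-1) + acoef 1 (-1) * U (t + 2) 1)) = 0"
    unfolding levels_Suc
    using coefficient_equation_at_odd_position[OF U, of "t + 3" 0,
        simplified, unfolded One_nat_def[symmetric]]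
      Theta_pow4 i_squared by algebra
  then show "U (t + 3) 0 = 2 * (acoef 1 1 * U (t + 2) (-1) + acoef 1 (-1) * U (t + 2) 1)"
    using eps_c_sq_nonzero by simp
  have "of_real \<epsilon> * c\<^sup>2 * (3 * U (t + 3) 2 - 2 * acoef 1 1 * U (t + 2) 1) = 0"
    unfolding levels_Suc
    using coefficient_equation_at_odd_position[OF U, of "t + 3" 2,
        simplified, unfolded One_nat_def[symmetric]]
      Theta_pow4 i_squared by algebra
  then show "U (t + 3) 2 = 2/3 * acoef 1 1 * U (t + 2) 1"
    using eps_c_sq_nonzero by (simp add: field_simps)
  have "of_real \<epsilon> * c\<^sup>2 * (3 * U (t + 3) (-2) - 2 * acoef 1 (-1) * U (t + 2) (-1)) = 0"
    unfolding levels_Suc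
    using coefficient_equation_at_odd_position[OF U, of "t + 3" "-2",
        simplified, unfolded One_nat_def[symmetric]]
      Theta_pow4 i_squared by algebra
  then show "U (t + 3) (-2) = 2/3 * acoef 1 (-1) * U (t + 2) (-1)"
    using eps_c_sq_nonzero by (simp add: field_simps)
qed

lemma U_resonant_zero: "U (t + 2) 1 = 0" "U (t + 2) (-1) = 0"
proof -
  note resonance_simps [simp] if_cong [cong]
  let ?X = "U (t + 2) 1" and ?Y = "U (t + 2) (-1)"
  have "of_real \<epsilon> * c\<^sup>2 * (4/9 * \<i> * c * \<Theta>\<^sup>2 * (- 1 - of_nat t - 2 * \<kappa>) * ?X
      + 16 * c\<^sup>2 * of_real \<epsilon> * (acoef 1 1)\<^sup>2 * ?Y) = 0"
    unfolding levels_Suc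
    using coefficient_equation_at_odd_position[OF U, of "t + 4" 1,
        simplified, unfolded One_nat_def[symmetric],
        unfolded U_next_level[unfolded levels_Suc] level2_coeffs(1,2)]
      Theta_pow4 i_squared a11 level2_coeffs(3) by algebra
  then have plus: "4/9 * \<i> * c * \<Theta>\<^sup>2 * (- 1 - of_nat t - 2 * \<kappa>) * ?X
      + 16 * c\<^sup>2 * of_real \<epsilon> * (acoef 1 1)\<^sup>2 * ?Y = 0"
    using eps_c_sq_nonzero by simp
  have "of_real \<epsilon> * c\<^sup>2 * (4/9 * \<i> * c * \<Theta>\<^sup>2 * (1 + of_nat t - 2 * \<kappa>) * ?Y
      + 16 * c\<^sup>2 * of_real \<epsilon> * (acoef 1 (-1))\<^sup>2 * ?X) = 0"
    unfolding levels_Suc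
    using coefficient_equation_at_odd_position[OF U, of "t + 4" "-1",
        simplified, unfolded One_nat_def[symmetric],
        unfolded U_next_level[unfolded levels_Suc] level2_coeffs(1,2)]
      Theta_pow4 i_squared a11 level2_coeffs(3) by algebra
  then have minus: "4/9 * \<i> * c * \<Theta>\<^sup>2 * (1 + of_nat t - 2 * \<kappa>) * ?Y
      + 16 * c\<^sup>2 * of_real \<epsilon> * (acoef 1 (-1))\<^sup>2 * ?X = 0"
    using eps_c_sq_nonzero by simp
  \<comment> \<open>the factor is the determinant of the system; \<open>\<kappa>\<close> cancels by \<open>a11\<close>\<close>
  have "576 * c ^ 4 * (of_nat t + 1)\<^sup>2 * ?X = 0" "576 * c ^ 4 * (of_nat t + 1)\<^sup>2 * ?Y = 0"
    using plus minus Theta_pow4 a11 i_squared eps_sq by algebra+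
  moreover have "(of_nat t + 1 :: complex) \<noteq> 0"
    by (metis of_nat_Suc of_nat_eq_0_iff add.commute nat.distinct(1))
  ultimately show "?X = 0" "?Y = 0"
    using c_nonzero by simp_all
qed

end

lemma odd_free_below_Suc:
  assumes U: "odd_free_below n U" and n: "2 \<le> n"
  shows "odd_free_below (Suc n) U"
proof -
  have "U n j = 0" if odd: "odd (int n + j)" for j
  proof (cases "j\<^sup>2 = 1")
    case False
    then show ?thesis using U_nonresonant[OF U _ odd] n by simp
  next
    case True
    then have j: "j = 1 \<or> j = -1"
      by (metis abs_power2 one_power2 power2_eq_iff)
    with odd have "even n" by auto
    then have "even (n - 2)" "n = (n - 2) + 2" using n by auto
    then show ?thesis using U_resonant_zero[of "n - 2"] U j by auto
  qed
  with U show ?thesis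
    unfolding odd_free_below_def by (auto simp: less_Suc_eq)
qed

lemma odd_free_below_U: "odd_free_below n U"
proof -
  have "odd_free_below n U" if "2 \<le> n" for n
    using that
  proof (induction n rule: nat_induct_at_least)
    case base
    show ?case
      unfolding odd_free_below_def by (auto simp: U_low_levels less_2_cases_iff)
  next
    case (Suc n)
    show ?case by (rule odd_free_below_Suc[OF Suc.IH Suc.hyps])
  qed
  then show ?thesis
    by (metis odd_free_below_mono nat_le_linear)
qed

lemma acoef_odd_position:
  assumes "odd (int n + j)" "\<bar>j\<bar> \<le> int n"
  shows "acoef n j = 0"
proof -
  have "U n j = 0" using odd_free_belowD[OF odd_free_below_U[of "Suc n"]] assms(1) by simp
  then show ?thesis using assms(2) c_nonzero by (simp add: U_def vser_def)
qed

end

theorem mainTheorem7: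
  fixes \<epsilon> b :: real and a \<beta> \<Theta> \<kappa> :: complex and acoef :: "nat \<Rightarrow> int \<Rightarrow> complex"
  assumes eps: "\<epsilon> = 1 \<or> \<epsilon> = -1"
    and b: "b \<noteq> 0"
    and beta: "\<beta> ^ 3 = of_real (\<epsilon> * b)"
    and Theta: "\<Theta>\<^sup>2 = 3 * of_real (sqrt 3) * \<beta>"
    and kappa: "\<bar>Re \<kappa>\<bar> < 1/2"
    and a00: "acoef 0 0 = 1"
    and a10: "acoef 1 0 = 0"
    and a11: "\<Theta>\<^sup>2 * acoef 1 1 * acoef 1 (-1) = - 3 * \<i> * \<kappa>"
    and formal: "\<forall>n j. PIII_residual \<epsilon> b a \<beta> \<kappa> \<Theta> acoef n j = 0"
  shows "(\<forall>n\<ge>1. acoef n (1 - int n) = 0 \<and> acoef n (int n - 1) = 0)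
       \<and> (\<forall>j\<ge>1. acoef (2 * j) 1 = 0 \<and> acoef (2 * j) (-1) = 0)
       \<and> (\<forall>j\<ge>1. A_gen \<Theta> acoef (2 * j - 1) = 0)"
proof -
  interpret PIII_formal_solution \<epsilon> b a \<beta> \<Theta> \<kappa> acoef
    using eps b beta Theta a00 a10 a11 formal by unfold_locales
  have A_odd: "A_gen \<Theta> acoef (2 * j - 1) = 0" if "j \<ge> 1" for j :: nat
  proof (rule fps_ext)
    fix n
    have "acoef n (int (2 * j - 1) - int n) = 0" if "j \<le> n"
      using \<open>j \<ge> 1\<close> that by (intro acoef_odd_position) (auto simp: of_nat_diff)
    then show "fps_nth (A_gen \<Theta> acoef (2 * j - 1)) n = fps_nth 0 n"
      using \<open>j \<ge> 1\<close> by (simp add: A_gen_def)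
  qed
  have "\<forall>n\<ge>1. acoef n (1 - int n) = 0 \<and> acoef n (int n - 1) = 0"
       "\<forall>j\<ge>1. acoef (2 * j) 1 = 0 \<and> acoef (2 * j) (-1) = 0"
    by (auto intro!: acoef_odd_position)
  with A_odd show ?thesis by blast
qed

end
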